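(* The real vector space with basis $J,H,G_a,P_a,J_a,H_a,G_{ab},P_{ab},J^*,H^*,G^*_{ab},P^*_{ab}$ with the following nonzero brackets is a Lie algebra (the double extension of $\operatorname{span}\{P_a,G_a,H_a,J_a\}$ by $\operatorname{span}\{H,J,P_{ab},G_{ab}\}$): $[J,G_a]=\epsilon_{am}G_m$, $[J,P_a]=\epsilon_{am}P_m$, $[G_a,H]=-\epsilon_{am}P_m$, $[G_a,G_b]=\epsilon_{ab}H^*$, $[G_a,P_b]=\epsilon_{ab}J^*$; $[J,J_a]=\epsilon_{am}J_m$, $[J,G_{ab}]=-\epsilon_{m(a}G_{b)m}$, $[J,H_a]=\epsilon_{am}H_m$, $[J,P_{ab}]=-\epsilon_{m(a}P_{b)m}$, $[G_a,G_{bc}]=-\epsilon_{a(b}J_{c)}$, $[G_a,P_{bc}]=-\epsilon_{a(b}H_{c)}$, $[H,J_a]=\epsilon_{am}H_m$, $[H,G_{ab}]=-\epsilon_{m(a}P_{b)m}$, $[P_a,G_{bc}]=-\epsilon_{a(b}H_{c)}$; $[J_a,G_{bc}]=\delta_{a(b}\epsilon_{c)m}G_m$, $[J_a,P_{bc}]=\delta_{a(b}\epsilon_{c)m}P_m$, $[G_{ab},G_{cd}]=\delta_{(a(c}\epsilon_{d)b)}J$, $[G_{ab},H_c]=-\delta_{c(a}\epsilon_{b)m}P_m$, $[G_{ab},P_{cd}]=\delta_{(a(c}\epsilon_{d)b)}H$; $[G_a,J_b]=-\epsilon_{am}P^*_{mb}$, $[G_a,H_b]=-\epsilon_{am}G^*_{mb}$,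 $[P_a,J_b]=-\epsilon_{am}G^*_{mb}$, $[J_a,J_b]=-\epsilon_{ab}H^*$, $[J_a,H_b]=-\epsilon_{ab}J^*$; $[J,P^*_{ab}]=-\epsilon_{m(a}P^*_{b)m}$, $[J,G^*_{ab}]=-\epsilon_{m(a}G^*_{b)m}$, $[H,P^*_{ab}]=-\epsilon_{m(a}G^*_{b)m}$, $[G_{ab},J^*]=-\epsilon_{m(a}G^*_{b)m}$, $[G_{ab},H^*]=-\epsilon_{m(a}P^*_{b)m}$, $[G_{ab},G^*_{cd}]=\epsilon_{(a(c}\delta_{d)b)}J^*$, $[G_{ab},P^*_{cd}]=\epsilon_{(a(c}\delta_{d)b)}H^*$, $[P_{ab},H^*]=-\epsilon_{m(a}G^*_{b)m}$, $[P_{ab},P^*_{cd}]=\epsilon_{(a(c}\delta_{d)b)}J^*$. It admits the invariant metric with nonzero entries $\langle P_a,G_b\rangle=\delta_{ab}$, $\langle H_a,J_b\rangle=-\delta_{ab}$, $\langle H,H^*\rangle=1$, $\langle J,J^*\rangle=1$, $\langle P_{ab},P^*_{cd}\rangle=\delta_{a(c}\delta_{d)b}$, $\langle G_{ab},G^*_{cd}\rangle=\delta_{a(c}\delta_{d)b}$.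
   Context: Indices $a,b,c,d,m\in\{1,2\}$, summed when repeated, $\epsilon_{12}=1$; $G_{ab},P_{ab},G^*_{ab},P^*_{ab}$ are symmetric. Symmetrization without normalization ($T_{(ab)}=T_{ab}+T_{ba}$, nested from outermost to innermost). An invariant metric is a symmetric nondegenerate bilinear form with $\langle[Z,X],Y\rangle+\langle X,[Z,Y]\rangle=0$. *)

theory Defs
  imports "HOL-Analysis.Analysis"
begin

datatype idx = I1 | I2

text \<open>Unordered pairs of indices, labelling the independent components of the
  symmetric generators G_ab, P_ab, G*_ab, P*_ab (G_12 = G_21 etc.).\<close>
datatype sidx = S11 | S12 | S22

definition sp :: "idx \<Rightarrow> idx \<Rightarrow> sidx" where
  "sp a b = (if a = b then (if a = I1 then S11 else S22) else S12)"

definition rep :: "sidx \<Rightarrow> idx \<times> idx" where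
  "rep s = (case s of S11 \<Rightarrow> (I1, I1) | S12 \<Rightarrow> (I1, I2) | S22 \<Rightarrow> (I2, I2))"

definition eps :: "idx \<Rightarrow> idx \<Rightarrow> real" where
  "eps a b = (if a = I1 \<and> b = I2 then 1 else if a = I2 \<and> b = I1 then -1 else 0)"

definition del :: "idx \<Rightarrow> idx \<Rightarrow> real" where
  "del a b = (if a = b then 1 else 0)"

datatype basis = Jc | Hc | Ga idx | Pa idx | Ja idx | Ha idx | Gab sidx | Pab sidx
  | Jst | Hst | Gst sidx | Pst sidx

lemma UNIV_idx: "(UNIV :: idx set) = {I1, I2}"
  using idx.exhaust by auto

lemma UNIV_sidx: "(UNIV :: sidx set) = {S11, S12, S22}"
  using sidx.exhaust by auto

instance idx :: finite
  by standard (simp add: UNIV_idx)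

instance sidx :: finite
  by standard (simp add: UNIV_sidx)

lemma UNIV_basis: "(UNIV :: basis set) = {Jc, Hc, Jst, Hst} \<union> range Ga \<union> range Pa \<union> range Ja
   \<union> range Ha \<union> range Gab \<union> range Pab \<union> range Gst \<union> range Pst"
proof -
  have "x \<in> {Jc, Hc, Jst, Hst} \<union> range Ga \<union> range Pa \<union> range Ja
   \<union> range Ha \<union> range Gab \<union> range Pab \<union> range Gst \<union> range Pst" for x
    by (cases x) simp_all
  then show ?thesis by blast
qed

instance basis :: finite
  by standard (simp add: UNIV_basis)

abbreviation ev :: "basis \<Rightarrow> real ^ basis" where
  "ev X \<equiv> axis X 1"

text \<open>Symmetrised tensor sums, unnormalised: T_(ab) = T_ab + T_ba.
  epsSym a b F = eps_{m(a} F_{b)m} = sum_m (eps_{ma} F_{bm} + eps_{mb} F_{am}).\<close>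
definition epsSym :: "idx \<Rightarrow> idx \<Rightarrow> (sidx \<Rightarrow> basis) \<Rightarrow> real ^ basis" where
  "epsSym a b F = (\<Sum>m\<in>UNIV. eps m a *\<^sub>R ev (F (sp b m)) + eps m b *\<^sub>R ev (F (sp a m)))"

text \<open>delta_{(a(c} eps_{d)b)} and eps_{(a(c} delta_{d)b)}, nested symmetrisation.\<close>
definition deleps :: "idx \<Rightarrow> idx \<Rightarrow> idx \<Rightarrow> idx \<Rightarrow> real" where
  "deleps a b c d = del a c * eps d b + del a d * eps c b + del b c * eps d a + del b d * eps c a"

definition epsdel :: "idx \<Rightarrow> idx \<Rightarrow> idx \<Rightarrow> idx \<Rightarrow> real" where
  "epsdel a b c d = eps a c * del d b + eps a d * del c b + eps b c * del d a + eps b d * del c a"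

text \<open>tab X Y is the bracket [X,Y] as listed in the statement (for the listed order
  of the pair); unlisted ordered pairs give 0.  For symmetric generators the formula
  is evaluated on the representative index pair rep s; all formulas are symmetric in
  the pair, so this is independent of the choice.\<close>
definition tJ :: "basis \<Rightarrow> real ^ basis" where
  "tJ Y = (case Y of
        Ga a \<Rightarrow> (\<Sum>m\<in>UNIV. eps a m *\<^sub>R ev (Ga m))
      | Pa a \<Rightarrow> (\<Sum>m\<in>UNIV. eps a m *\<^sub>R ev (Pa m))
      | Ja a \<Rightarrow> (\<Sum>m\<in>UNIV. eps a m *\<^sub>R ev (Ja m))
      | Ha a \<Rightarrow> (\<Sum>m\<in>UNIV. eps a m *\<^sub>R ev (Ha m))
      | Gab s \<Rightarrow> - epsSym (fst (rep s)) (snd (rep s)) Gab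
      | Pab s \<Rightarrow> - epsSym (fst (rep s)) (snd (rep s)) Pab
      | Pst s \<Rightarrow> - epsSym (fst (rep s)) (snd (rep s)) Pst
      | Gst s \<Rightarrow> - epsSym (fst (rep s)) (snd (rep s)) Gst
      | _ \<Rightarrow> 0)"

definition tG :: "idx \<Rightarrow> basis \<Rightarrow> real ^ basis" where
  "tG a Y = (case Y of
        Hc \<Rightarrow> - (\<Sum>m\<in>UNIV. eps a m *\<^sub>R ev (Pa m))
      | Ga b \<Rightarrow> eps a b *\<^sub>R ev Hst
      | Pa b \<Rightarrow> eps a b *\<^sub>R ev Jst
      | Gab s \<Rightarrow> - (eps a (fst (rep s)) *\<^sub>R ev (Ja (snd (rep s)))
                    + eps a (snd (rep s)) *\<^sub>R ev (Ja (fst (rep s))))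
      | Pab s \<Rightarrow> - (eps a (fst (rep s)) *\<^sub>R ev (Ha (snd (rep s)))
                    + eps a (snd (rep s)) *\<^sub>R ev (Ha (fst (rep s))))
      | Ja b \<Rightarrow> - (\<Sum>m\<in>UNIV. eps a m *\<^sub>R ev (Pst (sp m b)))
      | Ha b \<Rightarrow> - (\<Sum>m\<in>UNIV. eps a m *\<^sub>R ev (Gst (sp m b)))
      | _ \<Rightarrow> 0)"

definition tH :: "basis \<Rightarrow> real ^ basis" where
  "tH Y = (case Y of
        Ja a \<Rightarrow> (\<Sum>m\<in>UNIV. eps a m *\<^sub>R ev (Ha m))
      | Gab s \<Rightarrow> - epsSym (fst (rep s)) (snd (rep s)) Pab
      | Pst s \<Rightarrow> - epsSym (fst (rep s)) (snd (rep s)) Gst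
      | _ \<Rightarrow> 0)"

definition tP :: "idx \<Rightarrow> basis \<Rightarrow> real ^ basis" where
  "tP a Y = (case Y of
        Gab s \<Rightarrow> - (eps a (fst (rep s)) *\<^sub>R ev (Ha (snd (rep s)))
                    + eps a (snd (rep s)) *\<^sub>R ev (Ha (fst (rep s))))
      | Ja b \<Rightarrow> - (\<Sum>m\<in>UNIV. eps a m *\<^sub>R ev (Gst (sp m b)))
      | _ \<Rightarrow> 0)"

definition tJa :: "idx \<Rightarrow> basis \<Rightarrow> real ^ basis" where
  "tJa a Y = (case Y of
        Gab s \<Rightarrow> (\<Sum>m\<in>UNIV. (del a (fst (rep s)) * eps (snd (rep s)) m
                              + del a (snd (rep s)) * eps (fst (rep s)) m) *\<^sub>R ev (Ga m))
      | Pab s \<Rightarrow> (\<Sum>m\<in>UNIV. (del a (fst (rep s)) * eps (snd (rep s)) m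
                              + del a (snd (rep s)) * eps (fst (rep s)) m) *\<^sub>R ev (Pa m))
      | Ja b \<Rightarrow> - (eps a b *\<^sub>R ev Hst)
      | Ha b \<Rightarrow> - (eps a b *\<^sub>R ev Jst)
      | _ \<Rightarrow> 0)"

definition tGab :: "idx \<Rightarrow> idx \<Rightarrow> basis \<Rightarrow> real ^ basis" where
  "tGab a b Y = (case Y of
        Gab t \<Rightarrow> deleps a b (fst (rep t)) (snd (rep t)) *\<^sub>R ev Jc
      | Ha c \<Rightarrow> - (\<Sum>m\<in>UNIV. (del c a * eps b m + del c b * eps a m) *\<^sub>R ev (Pa m))
      | Pab t \<Rightarrow> deleps a b (fst (rep t)) (snd (rep t)) *\<^sub>R ev Hc
      | Jst \<Rightarrow> - epsSym a b Gst
      | Hst \<Rightarrow> - epsSym a b Pst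
      | Gst t \<Rightarrow> epsdel a b (fst (rep t)) (snd (rep t)) *\<^sub>R ev Jst
      | Pst t \<Rightarrow> epsdel a b (fst (rep t)) (snd (rep t)) *\<^sub>R ev Hst
      | _ \<Rightarrow> 0)"

definition tPab :: "idx \<Rightarrow> idx \<Rightarrow> basis \<Rightarrow> real ^ basis" where
  "tPab a b Y = (case Y of
        Hst \<Rightarrow> - epsSym a b Gst
      | Pst t \<Rightarrow> epsdel a b (fst (rep t)) (snd (rep t)) *\<^sub>R ev Jst
      | _ \<Rightarrow> 0)"

definition tab :: "basis \<Rightarrow> basis \<Rightarrow> real ^ basis" where
  "tab X Y = (case X of
     Jc \<Rightarrow> tJ Y
   | Ga a \<Rightarrow> tG a Y
   | Hc \<Rightarrow> tH Y
   | Pa a \<Rightarrow> tP a Y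
   | Ja a \<Rightarrow> tJa a Y
   | Gab s \<Rightarrow> tGab (fst (rep s)) (snd (rep s)) Y
   | Pab s \<Rightarrow> tPab (fst (rep s)) (snd (rep s)) Y
   | _ \<Rightarrow> 0)"

text \<open>Bracket of basis elements: the listed value, completed by antisymmetry
  ([Y,X] = -[X,Y]) for pairs only listed in the other order; all other brackets vanish.\<close>
definition cbr :: "basis \<Rightarrow> basis \<Rightarrow> real ^ basis" where
  "cbr X Y = (if tab X Y \<noteq> 0 then tab X Y else - tab Y X)"

definition lb :: "real ^ basis \<Rightarrow> real ^ basis \<Rightarrow> real ^ basis" where
  "lb x y = (\<Sum>i\<in>UNIV. \<Sum>j\<in>UNIV. (x $ i * y $ j) *\<^sub>R cbr i j)"

definition ddsym :: "sidx \<Rightarrow> sidx \<Rightarrow> real" where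
  "ddsym s t = del (fst (rep s)) (fst (rep t)) * del (snd (rep t)) (snd (rep s))
             + del (fst (rep s)) (snd (rep t)) * del (fst (rep t)) (snd (rep s))"

definition mtab :: "basis \<Rightarrow> basis \<Rightarrow> real" where
  "mtab X Y = (case X of
     Pa a \<Rightarrow> (case Y of Ga b \<Rightarrow> del a b | _ \<Rightarrow> 0)
   | Ha a \<Rightarrow> (case Y of Ja b \<Rightarrow> - del a b | _ \<Rightarrow> 0)
   | Hc \<Rightarrow> (case Y of Hst \<Rightarrow> 1 | _ \<Rightarrow> 0)
   | Jc \<Rightarrow> (case Y of Jst \<Rightarrow> 1 | _ \<Rightarrow> 0)
   | Pab s \<Rightarrow> (case Y of Pst t \<Rightarrow> ddsym s t | _ \<Rightarrow> 0)
   | Gab s \<Rightarrow> (case Y of Gst t \<Rightarrow> ddsym s t | _ \<Rightarrow> 0)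
   | _ \<Rightarrow> 0)"

definition mb :: "basis \<Rightarrow> basis \<Rightarrow> real" where
  "mb X Y = (if mtab X Y \<noteq> 0 then mtab X Y else mtab Y X)"

definition met :: "real ^ basis \<Rightarrow> real ^ basis \<Rightarrow> real" where
  "met x y = (\<Sum>i\<in>UNIV. \<Sum>j\<in>UNIV. x $ i * y $ j * mb i j)"

end

theory Submission
  imports Defs
begin

(* The bracket and the metric are the bilinear extensions of their values on the 24 basis
   vectors, so every claim reduces to finitely many identities between integer structure
   constants and the Gram matrix: antisymmetry, the Jacobi identity on each triple of
   generators, and ad-invariance on each triple.  These are verified by evaluating a sparse
   integer transcription of the bracket table, which simplification matches against the
   defining formulas.  The Gram matrix pairs every generator with a dual one (P_a with G_a,
   H_a with J_a, J with J*, H with H*, P_ab with P*_ab, G_ab with G*_ab), hence is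
   nondegenerate. *)

definition bracket_of :: "('i::finite \<Rightarrow> 'i \<Rightarrow> 'i \<Rightarrow> real) \<Rightarrow> real^'i \<Rightarrow> real^'i \<Rightarrow> real^'i" where
  "bracket_of C x y = (\<chi> l. \<Sum>i\<in>UNIV. \<Sum>j\<in>UNIV. x$i * y$j * C i j l)"

definition form_of :: "('i::finite \<Rightarrow> 'i \<Rightarrow> real) \<Rightarrow> real^'i \<Rightarrow> real^'i \<Rightarrow> real" where
  "form_of B x y = (\<Sum>i\<in>UNIV. \<Sum>j\<in>UNIV. x$i * y$j * B i j)"

lemma bracket_of_component:
  "bracket_of C x y $ l = (\<Sum>i\<in>UNIV. \<Sum>j\<in>UNIV. x$i * y$j * C i j l)"
  by (simp add: bracket_of_def)

lemma bracket_of_add_left: "bracket_of C (x + y) z = bracket_of C x z + bracket_of C y z"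
  by (simp add: vec_eq_iff bracket_of_component distrib_right sum.distrib)

lemma bracket_of_add_right: "bracket_of C x (y + z) = bracket_of C x y + bracket_of C x z"
  by (simp add: vec_eq_iff bracket_of_component distrib_left distrib_right sum.distrib)

lemma bracket_of_scaleR_left: "bracket_of C (c *\<^sub>R x) y = c *\<^sub>R bracket_of C x y"
  by (simp add: vec_eq_iff bracket_of_component sum_distrib_left mult_ac)

lemma bracket_of_scaleR_right: "bracket_of C x (c *\<^sub>R y) = c *\<^sub>R bracket_of C x y"
  by (simp add: vec_eq_iff bracket_of_component sum_distrib_left mult_ac)

lemma bracket_of_self:
  assumes "\<And>i j l. C j i l = - C i j l"
  shows "bracket_of C x x = 0"
proof -
  have "(\<Sum>i\<in>UNIV. \<Sum>j\<in>UNIV. x$i * x$j * C i j l) = 0" for l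
  proof -
    let ?S = "\<Sum>i\<in>UNIV. \<Sum>j\<in>UNIV. x$i * x$j * C i j l"
    have "?S = (\<Sum>j\<in>UNIV. \<Sum>i\<in>UNIV. x$i * x$j * C i j l)" by (rule sum.swap)
    also have "\<dots> = (\<Sum>j\<in>UNIV. \<Sum>i\<in>UNIV. - (x$j * x$i * C j i l))"
      by (intro sum.cong refl) (subst assms, simp)
    also have "\<dots> = - ?S" by (simp add: sum_negf)
    finally show ?thesis by simp
  qed
  then show ?thesis by (simp add: vec_eq_iff bracket_of_component)
qed

lemma sum_rotate3:
  "(\<Sum>a\<in>A. \<Sum>b\<in>B. \<Sum>c\<in>C. f a b c) = (\<Sum>b\<in>B. \<Sum>c\<in>C. \<Sum>a\<in>A. f a b c)"
  by (subst sum.swap) (rule sum.cong[OF refl], rule sum.swap)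

lemma bracket_of_nested_component:
  "bracket_of C x (bracket_of C y z) $ l
     = (\<Sum>i\<in>UNIV. \<Sum>j\<in>UNIV. \<Sum>k\<in>UNIV. x$i * y$j * z$k * (\<Sum>m\<in>UNIV. C j k m * C i m l))"
proof -
  have "bracket_of C x (bracket_of C y z) $ l
      = (\<Sum>i\<in>UNIV. \<Sum>m\<in>UNIV. \<Sum>j\<in>UNIV. \<Sum>k\<in>UNIV. x$i * y$j * z$k * (C j k m * C i m l))"
    by (simp add: bracket_of_component sum_distrib_left sum_distrib_right mult_ac)
  also have "\<dots> = (\<Sum>i\<in>UNIV. \<Sum>j\<in>UNIV. \<Sum>k\<in>UNIV. \<Sum>m\<in>UNIV. x$i * y$j * z$k * (C j k m * C i m l))"
    by (rule sum.cong[OF refl], rule sum_rotate3)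
  finally show ?thesis by (simp add: sum_distrib_left)
qed

lemma bracket_of_jacobi:
  assumes "\<And>i j k l. (\<Sum>m\<in>UNIV. C j k m * C i m l + C k i m * C j m l + C i j m * C k m l) = 0"
  shows "bracket_of C x (bracket_of C y z) + bracket_of C y (bracket_of C z x)
           + bracket_of C z (bracket_of C x y) = 0"
proof (subst vec_eq_iff, intro allI)
  fix l
  let ?T = "\<lambda>F. \<Sum>i\<in>UNIV. \<Sum>j\<in>UNIV. \<Sum>k\<in>UNIV. x$i * y$j * z$k * F i j k"
  have yzx: "bracket_of C y (bracket_of C z x) $ l = ?T (\<lambda>i j k. \<Sum>m\<in>UNIV. C k i m * C j m l)"
    unfolding bracket_of_nested_component by (subst sum_rotate3) (simp add: mult_ac)
  have zxy: "bracket_of C z (bracket_of C x y) $ l = ?T (\<lambda>i j k. \<Sum>m\<in>UNIV. C i j m * C k m l)"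
    unfolding bracket_of_nested_component by (subst sum_rotate3) (simp add: mult_ac)
  have "(bracket_of C x (bracket_of C y z) + bracket_of C y (bracket_of C z x)
           + bracket_of C z (bracket_of C x y)) $ l
      = ?T (\<lambda>i j k. \<Sum>m\<in>UNIV. C j k m * C i m l + C k i m * C j m l + C i j m * C k m l)"
    unfolding vector_add_component yzx zxy unfolding bracket_of_nested_component
    by (simp add: sum.distrib distrib_left)
  then show "(bracket_of C x (bracket_of C y z) + bracket_of C y (bracket_of C z x)
           + bracket_of C z (bracket_of C x y)) $ l = 0 $ l"
    by (simp add: assms)
qed

lemma form_of_commute:
  assumes "\<And>i j. B i j = B j i"
  shows "form_of B x y = form_of B y x"
  unfolding form_of_def by (subst sum.swap) (simp add: assms mult_ac)

lemma form_of_axis_right: "form_of B x (axis k 1) = (\<Sum>i\<in>UNIV. x$i * B i k)"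
proof -
  have "x$i * axis k 1 $ j * B i j = (if j = k then x$i * B i k else 0)" for i j
    by (simp add: axis_def)
  then show ?thesis by (simp add: form_of_def)
qed

lemma form_of_nondegenerate:
  assumes "\<And>k. \<exists>k'. B k k' \<noteq> 0 \<and> (\<forall>i. i \<noteq> k \<longrightarrow> B i k' = 0)"
    and "\<forall>y. form_of B x y = 0"
  shows "x = 0"
proof (subst vec_eq_iff, intro allI)
  fix k
  obtain k' where k': "B k k' \<noteq> 0" "\<And>i. i \<noteq> k \<Longrightarrow> B i k' = 0"
    using assms(1) by blast
  have "0 = form_of B x (axis k' 1)" using assms(2) by simp
  also have "\<dots> = x$k * B k k'"
    unfolding form_of_axis_right by (subst sum.remove[of _ k]) (simp_all add: k')
  finally show "x $ k = 0 $ k" using k'(1) by simp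
qed

lemma form_of_bracket_left:
  "form_of B (bracket_of C z x) y
     = (\<Sum>a\<in>UNIV. \<Sum>b\<in>UNIV. \<Sum>c\<in>UNIV. z$a * x$b * y$c * (\<Sum>m\<in>UNIV. C a b m * B m c))"
proof -
  have "form_of B (bracket_of C z x) y
      = (\<Sum>m\<in>UNIV. \<Sum>c\<in>UNIV. \<Sum>a\<in>UNIV. \<Sum>b\<in>UNIV. z$a * x$b * y$c * (C a b m * B m c))"
    by (simp add: form_of_def bracket_of_component sum_distrib_left sum_distrib_right mult_ac)
  also have "\<dots> = (\<Sum>m\<in>UNIV. \<Sum>a\<in>UNIV. \<Sum>b\<in>UNIV. \<Sum>c\<in>UNIV. z$a * x$b * y$c * (C a b m * B m c))"
    by (rule sum.cong[OF refl], rule sum_rotate3)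
  also have "\<dots> = (\<Sum>a\<in>UNIV. \<Sum>b\<in>UNIV. \<Sum>c\<in>UNIV. \<Sum>m\<in>UNIV. z$a * x$b * y$c * (C a b m * B m c))"
    by (subst sum_rotate3) (rule sum.cong[OF refl], rule sum.cong[OF refl], rule sum.swap)
  finally show ?thesis by (simp add: sum_distrib_left)
qed

lemma form_of_bracket_right:
  "form_of B x (bracket_of C z y)
     = (\<Sum>a\<in>UNIV. \<Sum>b\<in>UNIV. \<Sum>c\<in>UNIV. z$a * x$b * y$c * (\<Sum>m\<in>UNIV. B b m * C a c m))"
proof -
  have "form_of B x (bracket_of C z y)
      = (\<Sum>b\<in>UNIV. \<Sum>m\<in>UNIV. \<Sum>a\<in>UNIV. \<Sum>c\<in>UNIV. z$a * x$b * y$c * (B b m * C a c m))"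
    by (simp add: form_of_def bracket_of_component sum_distrib_left sum_distrib_right mult_ac)
  also have "\<dots> = (\<Sum>b\<in>UNIV. \<Sum>a\<in>UNIV. \<Sum>c\<in>UNIV. \<Sum>m\<in>UNIV. z$a * x$b * y$c * (B b m * C a c m))"
    by (rule sum.cong[OF refl], rule sum_rotate3)
  also have "\<dots> = (\<Sum>a\<in>UNIV. \<Sum>b\<in>UNIV. \<Sum>c\<in>UNIV. \<Sum>m\<in>UNIV. z$a * x$b * y$c * (B b m * C a c m))"
    by (rule sum.swap)
  finally show ?thesis by (simp add: sum_distrib_left)
qed

lemma form_of_invariant:
  assumes "\<And>a b c. (\<Sum>m\<in>UNIV. C a b m * B m c) + (\<Sum>m\<in>UNIV. B b m * C a c m) = 0"
  shows "form_of B (bracket_of C z x) y + form_of B x (bracket_of C z y) = 0"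
proof -
  have "form_of B (bracket_of C z x) y + form_of B x (bracket_of C z y)
      = (\<Sum>a\<in>UNIV. \<Sum>b\<in>UNIV. \<Sum>c\<in>UNIV. z$a * x$b * y$c *
           ((\<Sum>m\<in>UNIV. C a b m * B m c) + (\<Sum>m\<in>UNIV. B b m * C a c m)))"
    unfolding form_of_bracket_left form_of_bracket_right by (simp add: sum.distrib distrib_left)
  then show ?thesis by (simp add: assms)
qed

type_synonym lincomb = "(int \<times> basis) list"

definition lincomb_coeff :: "basis \<Rightarrow> lincomb \<Rightarrow> int" where
  "lincomb_coeff k xs = (\<Sum>(c, W)\<leftarrow>xs. if W = k then c else 0)"

definition vanishes :: "lincomb \<Rightarrow> bool" where
  "vanishes xs \<longleftrightarrow> list_all (\<lambda>k. lincomb_coeff k xs = 0) (map snd xs)"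

(* Integer transcription of tab, in the coordinates G_11, G_12, G_22 etc. of the symmetric
   generators; for instance [J, G_11] = 2 G_12. *)
definition bracket_table :: "basis \<Rightarrow> basis \<Rightarrow> lincomb" where
  "bracket_table X Y = (case X of
     Jc \<Rightarrow> (case Y of
         Ga I1 \<Rightarrow> [(1, Ga I2)] | Ga I2 \<Rightarrow> [(-1, Ga I1)]
       | Pa I1 \<Rightarrow> [(1, Pa I2)] | Pa I2 \<Rightarrow> [(-1, Pa I1)]
       | Ja I1 \<Rightarrow> [(1, Ja I2)] | Ja I2 \<Rightarrow> [(-1, Ja I1)]
       | Ha I1 \<Rightarrow> [(1, Ha I2)] | Ha I2 \<Rightarrow> [(-1, Ha I1)]
       | Gab S11 \<Rightarrow> [(2, Gab S12)]
       | Gab S12 \<Rightarrow> [(-1, Gab S11), (1, Gab S22)]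
       | Gab S22 \<Rightarrow> [(-2, Gab S12)] | Pab S11 \<Rightarrow> [(2, Pab S12)]
       | Pab S12 \<Rightarrow> [(-1, Pab S11), (1, Pab S22)]
       | Pab S22 \<Rightarrow> [(-2, Pab S12)] | Gst S11 \<Rightarrow> [(2, Gst S12)]
       | Gst S12 \<Rightarrow> [(-1, Gst S11), (1, Gst S22)]
       | Gst S22 \<Rightarrow> [(-2, Gst S12)] | Pst S11 \<Rightarrow> [(2, Pst S12)]
       | Pst S12 \<Rightarrow> [(-1, Pst S11), (1, Pst S22)]
       | Pst S22 \<Rightarrow> [(-2, Pst S12)] | _ \<Rightarrow> [])
   | Hc \<Rightarrow> (case Y of
         Ja I1 \<Rightarrow> [(1, Ha I2)] | Ja I2 \<Rightarrow> [(-1, Ha I1)]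
       | Gab S11 \<Rightarrow> [(2, Pab S12)]
       | Gab S12 \<Rightarrow> [(-1, Pab S11), (1, Pab S22)]
       | Gab S22 \<Rightarrow> [(-2, Pab S12)] | Pst S11 \<Rightarrow> [(2, Gst S12)]
       | Pst S12 \<Rightarrow> [(-1, Gst S11), (1, Gst S22)]
       | Pst S22 \<Rightarrow> [(-2, Gst S12)] | _ \<Rightarrow> [])
   | Ga I1 \<Rightarrow> (case Y of
         Hc \<Rightarrow> [(-1, Pa I2)] | Ga I2 \<Rightarrow> [(1, Hst)]
       | Pa I2 \<Rightarrow> [(1, Jst)] | Ja I1 \<Rightarrow> [(-1, Pst S12)]
       | Ja I2 \<Rightarrow> [(-1, Pst S22)] | Ha I1 \<Rightarrow> [(-1, Gst S12)]
       | Ha I2 \<Rightarrow> [(-1, Gst S22)] | Gab S12 \<Rightarrow> [(-1, Ja I1)]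
       | Gab S22 \<Rightarrow> [(-2, Ja I2)] | Pab S12 \<Rightarrow> [(-1, Ha I1)]
       | Pab S22 \<Rightarrow> [(-2, Ha I2)] | _ \<Rightarrow> [])
   | Ga I2 \<Rightarrow> (case Y of
         Hc \<Rightarrow> [(1, Pa I1)] | Ga I1 \<Rightarrow> [(-1, Hst)]
       | Pa I1 \<Rightarrow> [(-1, Jst)] | Ja I1 \<Rightarrow> [(1, Pst S11)]
       | Ja I2 \<Rightarrow> [(1, Pst S12)] | Ha I1 \<Rightarrow> [(1, Gst S11)]
       | Ha I2 \<Rightarrow> [(1, Gst S12)] | Gab S11 \<Rightarrow> [(2, Ja I1)]
       | Gab S12 \<Rightarrow> [(1, Ja I2)] | Pab S11 \<Rightarrow> [(2, Ha I1)]
       | Pab S12 \<Rightarrow> [(1, Ha I2)] | _ \<Rightarrow> [])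
   | Pa I1 \<Rightarrow> (case Y of
         Ja I1 \<Rightarrow> [(-1, Gst S12)] | Ja I2 \<Rightarrow> [(-1, Gst S22)]
       | Gab S12 \<Rightarrow> [(-1, Ha I1)] | Gab S22 \<Rightarrow> [(-2, Ha I2)]
       | _ \<Rightarrow> [])
   | Pa I2 \<Rightarrow> (case Y of
         Ja I1 \<Rightarrow> [(1, Gst S11)] | Ja I2 \<Rightarrow> [(1, Gst S12)]
       | Gab S11 \<Rightarrow> [(2, Ha I1)] | Gab S12 \<Rightarrow> [(1, Ha I2)]
       | _ \<Rightarrow> [])
   | Ja I1 \<Rightarrow> (case Y of
         Ja I2 \<Rightarrow> [(-1, Hst)] | Ha I2 \<Rightarrow> [(-1, Jst)]
       | Gab S11 \<Rightarrow> [(2, Ga I2)] | Gab S12 \<Rightarrow> [(-1, Ga I1)]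
       | Pab S11 \<Rightarrow> [(2, Pa I2)] | Pab S12 \<Rightarrow> [(-1, Pa I1)]
       | _ \<Rightarrow> [])
   | Ja I2 \<Rightarrow> (case Y of
         Ja I1 \<Rightarrow> [(1, Hst)] | Ha I1 \<Rightarrow> [(1, Jst)]
       | Gab S12 \<Rightarrow> [(1, Ga I2)] | Gab S22 \<Rightarrow> [(-2, Ga I1)]
       | Pab S12 \<Rightarrow> [(1, Pa I2)] | Pab S22 \<Rightarrow> [(-2, Pa I1)]
       | _ \<Rightarrow> [])
   | Gab S11 \<Rightarrow> (case Y of
         Jst \<Rightarrow> [(2, Gst S12)] | Hst \<Rightarrow> [(2, Pst S12)]
       | Ha I1 \<Rightarrow> [(-2, Pa I2)] | Gab S12 \<Rightarrow> [(-2, Jc)]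
       | Pab S12 \<Rightarrow> [(-2, Hc)] | Gst S12 \<Rightarrow> [(2, Jst)]
       | Pst S12 \<Rightarrow> [(2, Hst)] | _ \<Rightarrow> [])
   | Gab S12 \<Rightarrow> (case Y of
         Jst \<Rightarrow> [(-1, Gst S11), (1, Gst S22)]
       | Hst \<Rightarrow> [(-1, Pst S11), (1, Pst S22)]
       | Ha I1 \<Rightarrow> [(1, Pa I1)] | Ha I2 \<Rightarrow> [(-1, Pa I2)]
       | Gab S11 \<Rightarrow> [(2, Jc)] | Gab S22 \<Rightarrow> [(-2, Jc)]
       | Pab S11 \<Rightarrow> [(2, Hc)] | Pab S22 \<Rightarrow> [(-2, Hc)]
       | Gst S11 \<Rightarrow> [(-2, Jst)] | Gst S22 \<Rightarrow> [(2, Jst)]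
       | Pst S11 \<Rightarrow> [(-2, Hst)] | Pst S22 \<Rightarrow> [(2, Hst)]
       | _ \<Rightarrow> [])
   | Gab S22 \<Rightarrow> (case Y of
         Jst \<Rightarrow> [(-2, Gst S12)] | Hst \<Rightarrow> [(-2, Pst S12)]
       | Ha I2 \<Rightarrow> [(2, Pa I1)] | Gab S12 \<Rightarrow> [(2, Jc)]
       | Pab S12 \<Rightarrow> [(2, Hc)] | Gst S12 \<Rightarrow> [(-2, Jst)]
       | Pst S12 \<Rightarrow> [(-2, Hst)] | _ \<Rightarrow> [])
   | Pab S11 \<Rightarrow> (case Y of
         Hst \<Rightarrow> [(2, Gst S12)] | Pst S12 \<Rightarrow> [(2, Jst)]
       | _ \<Rightarrow> [])
   | Pab S12 \<Rightarrow> (case Y of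
         Hst \<Rightarrow> [(-1, Gst S11), (1, Gst S22)]
       | Pst S11 \<Rightarrow> [(-2, Jst)] | Pst S22 \<Rightarrow> [(2, Jst)]
       | _ \<Rightarrow> [])
   | Pab S22 \<Rightarrow> (case Y of
         Hst \<Rightarrow> [(-2, Gst S12)] | Pst S12 \<Rightarrow> [(-2, Jst)]
       | _ \<Rightarrow> [])
   | _ \<Rightarrow> [])"

definition bracket_list :: "basis \<Rightarrow> basis \<Rightarrow> lincomb" where
  "bracket_list X Y =
     (if bracket_table X Y \<noteq> [] then bracket_table X Y
      else map (\<lambda>(c, W). (- c, W)) (bracket_table Y X))"

definition ad_list :: "basis \<Rightarrow> lincomb \<Rightarrow> lincomb" where
  "ad_list X xs = concat (map (\<lambda>(c, W). map (\<lambda>(d, U). (c * d, U)) (bracket_list X W)) xs)"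

definition jacobiator_list :: "basis \<Rightarrow> basis \<Rightarrow> basis \<Rightarrow> lincomb" where
  "jacobiator_list X Y Z =
     ad_list X (bracket_list Y Z) @ ad_list Y (bracket_list Z X) @ ad_list Z (bracket_list X Y)"

fun dual :: "basis \<Rightarrow> basis" where
  "dual Jc = Jst" | "dual Jst = Jc" | "dual Hc = Hst" | "dual Hst = Hc"
| "dual (Ga a) = Pa a" | "dual (Pa a) = Ga a" | "dual (Ja a) = Ha a" | "dual (Ha a) = Ja a"
| "dual (Gab s) = Gst s" | "dual (Gst s) = Gab s" | "dual (Pab s) = Pst s" | "dual (Pst s) = Pab s"

(* delta_{a(c} delta_{d)b} is 2 for a = b = c = d and 1 for (a,b) = (c,d) = (1,2). *)
fun metric_weight :: "basis \<Rightarrow> int" where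
  "metric_weight (Ja _) = -1"
| "metric_weight (Ha _) = -1"
| "metric_weight (Gab s) = (if s = S12 then 1 else 2)"
| "metric_weight (Gst s) = (if s = S12 then 1 else 2)"
| "metric_weight (Pab s) = (if s = S12 then 1 else 2)"
| "metric_weight (Pst s) = (if s = S12 then 1 else 2)"
| "metric_weight _ = 1"

definition metric_table :: "basis \<Rightarrow> basis \<Rightarrow> int" where
  "metric_table X Y = (if Y = dual X then metric_weight X else 0)"

definition struct_const :: "basis \<Rightarrow> basis \<Rightarrow> basis \<Rightarrow> real" where
  "struct_const X Y Z = of_int (lincomb_coeff Z (bracket_list X Y))"

definition basis_list :: "basis list" where
  "basis_list = [Jc, Hc, Jst, Hst, Ga I1, Ga I2, Pa I1, Pa I2, Ja I1, Ja I2, Ha I1, Ha I2,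
     Gab S11, Gab S12, Gab S22, Pab S11, Pab S12, Pab S22,
     Gst S11, Gst S12, Gst S22, Pst S11, Pst S12, Pst S22]"

lemma all_basis:
  "(\<forall>X. P X) \<longleftrightarrow> P Jc \<and> P Hc \<and> P Jst \<and> P Hst \<and> P (Ga I1) \<and> P (Ga I2) \<and> P (Pa I1) \<and> P (Pa I2)
     \<and> P (Ja I1) \<and> P (Ja I2) \<and> P (Ha I1) \<and> P (Ha I2) \<and> P (Gab S11) \<and> P (Gab S12) \<and> P (Gab S22)
     \<and> P (Pab S11) \<and> P (Pab S12) \<and> P (Pab S22) \<and> P (Gst S11) \<and> P (Gst S12) \<and> P (Gst S22)
     \<and> P (Pst S11) \<and> P (Pst S12) \<and> P (Pst S22)" (is "_ \<longleftrightarrow> ?each")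
proof
  assume ?each
  show "\<forall>X. P X"
  proof
    show "P X" for X
      using \<open>?each\<close> by (cases X) (metis idx.exhaust sidx.exhaust)+
  qed
qed simp

lemma set_basis_list: "set basis_list = UNIV"
proof -
  have "\<forall>X. X \<in> set basis_list"
    unfolding all_basis by (simp add: basis_list_def)
  then show ?thesis by blast
qed

lemma lincomb_coeff_simps [simp]:
  "lincomb_coeff k [] = 0"
  "lincomb_coeff k ((c, W) # xs) = (if W = k then c else 0) + lincomb_coeff k xs"
  "lincomb_coeff k (xs @ ys) = lincomb_coeff k xs + lincomb_coeff k ys"
  by (simp_all add: lincomb_coeff_def)

lemma lincomb_coeff_scale [simp]:
  "lincomb_coeff k (map (\<lambda>(d, U). (c * d, U)) xs) = c * lincomb_coeff k xs"
  by (induction xs) (auto simp: algebra_simps)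

lemma lincomb_coeff_uminus [simp]:
  "lincomb_coeff k (map (\<lambda>(c, W). (- c, W)) xs) = - lincomb_coeff k xs"
  by (induction xs) auto

lemma lincomb_coeff_eq_0_if_vanishes: "vanishes xs \<Longrightarrow> lincomb_coeff k xs = 0"
proof (cases "k \<in> set (map snd xs)")
  case False
  then show ?thesis by (induction xs) auto
qed (auto simp: vanishes_def list_all_iff)

lemma sum_lincomb_coeff_mult:
  "(\<Sum>m\<in>UNIV. of_int (lincomb_coeff m xs) * f m) = (\<Sum>(c, W)\<leftarrow>xs. of_int c * (f W :: real))"
proof (induction xs)
  case (Cons p xs)
  obtain c W where p: "p = (c, W)" by (cases p)
  have "of_int (lincomb_coeff m (p # xs)) * f m
      = (if W = m then of_int c * f m else 0) + of_int (lincomb_coeff m xs) * f m" for m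
    by (simp add: p distrib_right)
  then show ?case using Cons by (simp add: p sum.distrib)
qed simp

lemma of_int_sum_lincomb:
  "of_int (\<Sum>(c, W)\<leftarrow>xs. c * f W) = (\<Sum>(c, W)\<leftarrow>xs. of_int c * (of_int (f W) :: real))"
  by (induction xs) auto

lemma lincomb_coeff_ad_list:
  "(\<Sum>(c, W)\<leftarrow>xs. of_int c * of_int (lincomb_coeff Z (bracket_list X W)))
     = (of_int (lincomb_coeff Z (ad_list X xs)) :: real)"
  by (induction xs) (auto simp: ad_list_def)

lemma bracket_table_nonzero:
  "list_all (\<lambda>X. list_all (\<lambda>Y. bracket_table X Y = [] \<or>
     list_ex (\<lambda>k. lincomb_coeff k (bracket_table X Y) \<noteq> 0) basis_list) basis_list) basis_list"
  by code_simp

lemma bracket_list_antisymmetric: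
  "list_all (\<lambda>X. list_all (\<lambda>Y. vanishes (bracket_list X Y @ bracket_list Y X)) basis_list) basis_list"
  by code_simp

lemma jacobiator_list_vanishes:
  "list_all (\<lambda>X. list_all (\<lambda>Y. list_all (\<lambda>Z. vanishes (jacobiator_list X Y Z))
     basis_list) basis_list) basis_list"
  by code_simp

lemma metric_table_invariant:
  "list_all (\<lambda>X. list_all (\<lambda>Y. list_all (\<lambda>Z.
     (\<Sum>(c, W)\<leftarrow>bracket_list X Y. c * metric_table W Z)
       + (\<Sum>(c, W)\<leftarrow>bracket_list X Z. c * metric_table W Y) = 0)
     basis_list) basis_list) basis_list"
  by code_simp

lemma tab_eq_bracket_table: "\<forall>X Y k. tab X Y $ k = of_int (lincomb_coeff k (bracket_table X Y))"
  unfolding all_basis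
  by (simp add: tab_def tJ_def tG_def tH_def tP_def tJa_def tGab_def tPab_def bracket_table_def
      epsSym_def UNIV_idx eps_def del_def deleps_def epsdel_def rep_def sp_def axis_def)

lemma mb_eq_metric_table: "\<forall>X Y. mb X Y = of_int (metric_table X Y)"
  unfolding all_basis
  by (simp add: mb_def mtab_def metric_table_def ddsym_def rep_def del_def)

lemma tab_eq_0_iff: "tab X Y = 0 \<longleftrightarrow> bracket_table X Y = []"
proof
  assume "tab X Y = 0"
  then have "\<forall>k. lincomb_coeff k (bracket_table X Y) = 0"
    using tab_eq_bracket_table by (metis of_int_eq_0_iff zero_index)
  moreover have "\<forall>X Y. bracket_table X Y = [] \<or> (\<exists>k. lincomb_coeff k (bracket_table X Y) \<noteq> 0)"
    using bracket_table_nonzero by (simp add: list_all_iff list_ex_iff set_basis_list)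
  ultimately show "bracket_table X Y = []"
    by blast
qed (simp add: vec_eq_iff tab_eq_bracket_table)

lemma lb_eq_bracket_of: "lb = bracket_of struct_const"
proof (intro ext)
  have "cbr X Y $ Z = struct_const X Y Z" for X Y Z
    by (simp add: cbr_def struct_const_def bracket_list_def tab_eq_0_iff tab_eq_bracket_table)
  then show "lb x y = bracket_of struct_const x y" for x y
    by (simp add: vec_eq_iff lb_def bracket_of_component)
qed

lemma met_eq_form_of: "met = form_of mb"
  by (intro ext) (simp add: met_def form_of_def)

lemma struct_const_antisym: "struct_const Y X Z = - struct_const X Y Z"
proof -
  have "vanishes (bracket_list X Y @ bracket_list Y X)"
    using bracket_list_antisymmetric by (simp add: list_all_iff set_basis_list)
  then have "lincomb_coeff Z (bracket_list X Y @ bracket_list Y X) = 0"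
    by (rule lincomb_coeff_eq_0_if_vanishes)
  then show ?thesis by (simp add: struct_const_def)
qed

lemma struct_const_jacobi:
  "(\<Sum>m\<in>UNIV. struct_const Y Z m * struct_const X m l + struct_const Z X m * struct_const Y m l
      + struct_const X Y m * struct_const Z m l) = 0"
proof -
  have "(\<Sum>m\<in>UNIV. struct_const Y Z m * struct_const X m l + struct_const Z X m * struct_const Y m l
      + struct_const X Y m * struct_const Z m l) = of_int (lincomb_coeff l (jacobiator_list X Y Z))"
    by (simp add: sum.distrib struct_const_def sum_lincomb_coeff_mult lincomb_coeff_ad_list
        jacobiator_list_def)
  also have "\<dots> = 0"
    using jacobiator_list_vanishes
    by (simp add: list_all_iff set_basis_list lincomb_coeff_eq_0_if_vanishes)
  finally show ?thesis .
qed

lemma mb_commute: "mb X Y = mb Y X"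
proof -
  have "metric_table X Y = metric_table Y X"
    by (cases X; cases Y) (auto simp: metric_table_def)
  then show ?thesis by (simp add: mb_eq_metric_table)
qed

lemma dual_eq_dual_iff: "dual W = dual X \<longleftrightarrow> W = X"
  by (cases W; cases X) auto

lemma mb_dual: "mb X (dual X) \<noteq> 0 \<and> (\<forall>W. W \<noteq> X \<longrightarrow> mb W (dual X) = 0)"
proof -
  have "metric_weight X \<noteq> 0"
    by (cases X) auto
  then show ?thesis
    by (simp add: mb_eq_metric_table metric_table_def dual_eq_dual_iff)
qed

lemma sum_struct_const_mb:
  "(\<Sum>m\<in>UNIV. struct_const X Y m * mb m Z)
     = of_int (\<Sum>(c, W)\<leftarrow>bracket_list X Y. c * metric_table W Z)"
  by (simp add: struct_const_def mb_eq_metric_table sum_lincomb_coeff_mult of_int_sum_lincomb)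

lemma mb_invariant:
  "(\<Sum>m\<in>UNIV. struct_const X Y m * mb m Z) + (\<Sum>m\<in>UNIV. mb Y m * struct_const X Z m) = 0"
proof -
  have "(\<Sum>m\<in>UNIV. mb Y m * struct_const X Z m) = (\<Sum>m\<in>UNIV. struct_const X Z m * mb m Y)"
    by (rule sum.cong[OF refl]) (subst mb_commute, rule mult.commute)
  then have "(\<Sum>m\<in>UNIV. struct_const X Y m * mb m Z) + (\<Sum>m\<in>UNIV. mb Y m * struct_const X Z m)
      = of_int ((\<Sum>(c, W)\<leftarrow>bracket_list X Y. c * metric_table W Z)
          + (\<Sum>(c, W)\<leftarrow>bracket_list X Z. c * metric_table W Y))"
    by (simp add: sum_struct_const_mb)
  also have "\<dots> = 0"
    using metric_table_invariant by (simp add: list_all_iff set_basis_list)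
  finally show ?thesis .
qed

theorem mainTheorem11:
  shows "(\<forall>x y z. lb (x + y) z = lb x z + lb y z)
       \<and> (\<forall>(c::real) x y. lb (c *\<^sub>R x) y = c *\<^sub>R lb x y)
       \<and> (\<forall>x y z. lb x (y + z) = lb x y + lb x z)
       \<and> (\<forall>(c::real) x y. lb x (c *\<^sub>R y) = c *\<^sub>R lb x y)
       \<and> (\<forall>x. lb x x = 0)
       \<and> (\<forall>x y z. lb x (lb y z) + lb y (lb z x) + lb z (lb x y) = 0)
       \<and> (\<forall>x y. met x y = met y x)
       \<and> (\<forall>x. (\<forall>y. met x y = 0) \<longrightarrow> x = 0)
       \<and> (\<forall>x y z. met (lb z x) y + met x (lb z y) = 0)"
  unfolding lb_eq_bracket_of met_eq_form_of
proof (intro conjI allI impI)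
  show "bracket_of struct_const x x = 0" for x
    using struct_const_antisym by (rule bracket_of_self)
  show "bracket_of struct_const x (bracket_of struct_const y z)
      + bracket_of struct_const y (bracket_of struct_const z x)
      + bracket_of struct_const z (bracket_of struct_const x y) = 0" for x y z
    using struct_const_jacobi by (rule bracket_of_jacobi)
  show "form_of mb x y = form_of mb y x" for x y
    using mb_commute by (rule form_of_commute)
  show "x = 0" if "\<forall>y. form_of mb x y = 0" for x
    by (rule form_of_nondegenerate[OF _ that]) (use mb_dual in blast)
  show "form_of mb (bracket_of struct_const z x) y + form_of mb x (bracket_of struct_const z y) = 0"
    for x y z
    using mb_invariant by (rule form_of_invariant)
qed (simp_all add: bracket_of_add_left bracket_of_add_right
       bracket_of_scaleR_left bracket_of_scaleR_right)

end
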